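(* Let $C\subseteq\mathbb{F}_q^n$ be a perfect code (binary or non-binary) with covering radius $\rho$. Then the set $C(\rho)$ of vectors at distance $\rho$ from $C$ has minimum distance $1$.
   Context: Hamming distance $d$; $d({\bf v},C)=\min_{{\bf x}\in C}d({\bf v},{\bf x})$; covering radius $\rho=\max_{\bf v}d({\bf v},C)$; $C(\rho)=\{{\bf v}\in\mathbb{F}_q^n: d({\bf v},C)=\rho\}$. For a code with minimum distance $d$, the packing radius is $e=\lfloor (d-1)/2\rfloor$; the code is perfect if $e=\rho$. Codes need not be linear. *)

theory Defs
  imports "HOL-Analysis.Finite_Cartesian_Product"
begin

definition hamming :: "'a ^ 'n \<Rightarrow> 'a ^ 'n \<Rightarrow> nat" where
  "hamming x y = card {i. x $ i \<noteq> y $ i}"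

definition dist_code :: "'a ^ 'n \<Rightarrow> ('a ^ 'n) set \<Rightarrow> nat" where
  "dist_code v C = Min {hamming v x | x. x \<in> C}"

definition covering_radius :: "('a ^ 'n::finite) set \<Rightarrow> nat" where
  "covering_radius C = Max {dist_code v C | v. v \<in> (UNIV :: ('a ^ 'n) set)}"

definition at_distance :: "('a ^ 'n) set \<Rightarrow> nat \<Rightarrow> ('a ^ 'n) set" where
  "at_distance C r = {v. dist_code v C = r}"

definition min_distance :: "('a ^ 'n) set \<Rightarrow> nat" where
  "min_distance C = Min {hamming x y | x y. x \<in> C \<and> y \<in> C \<and> x \<noteq> y}"

definition packing_radius :: "('a ^ 'n) set \<Rightarrow> nat" where
  "packing_radius C = (min_distance C - 1) div 2"

definition perfect_code :: "('a ^ 'n::finite) set \<Rightarrow> bool" where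
  "perfect_code C \<longleftrightarrow> packing_radius C = covering_radius C"

end

theory Submission
  imports Defs
begin

text \<open>
  By the triangle inequality, a vector at distance \<open>k\<close> from a codeword is at distance at
  least \<open>min k (d - k)\<close> from the code. Since \<open>2\<rho> + 1 \<le> d\<close>, raising \<open>\<rho>\<close> coordinates of a
  codeword \<open>c\<close> by one gives a vector \<open>v\<close> at distance exactly \<open>\<rho>\<close> from the code; raising one
  further coordinate gives a neighbour \<open>w\<close> of \<open>v\<close> at distance \<open>\<rho> + 1\<close> from \<open>c\<close>, hence at
  distance at least \<open>\<rho>\<close> from the code, and at most \<open>\<rho>\<close> by the covering radius. So
  \<open>v, w \<in> C(\<rho>)\<close> are adjacent.
\<close>

lemma hamming_le_card: "hamming (x :: 'a ^ 'n::finite) y \<le> CARD('n)"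
  unfolding hamming_def by (rule card_mono) auto

lemma hamming_commute: "hamming x y = hamming y x"
  unfolding hamming_def by (metis (mono_tags))

lemma hamming_triangle: "hamming (x :: 'a ^ 'n::finite) z \<le> hamming x y + hamming y z"
proof -
  have "{i. x $ i \<noteq> z $ i} \<subseteq> {i. x $ i \<noteq> y $ i} \<union> {i. y $ i \<noteq> z $ i}" by auto
  hence "card {i. x $ i \<noteq> z $ i} \<le> card ({i. x $ i \<noteq> y $ i} \<union> {i. y $ i \<noteq> z $ i})"
    by (intro card_mono) auto
  also have "\<dots> \<le> card {i. x $ i \<noteq> y $ i} + card {i. y $ i \<noteq> z $ i}" by (rule card_Un_le)
  finally show ?thesis unfolding hamming_def .
qed

lemma hamming_eq_0_iff: "hamming (x :: 'a ^ 'n::finite) y = 0 \<longleftrightarrow> x = y"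
  unfolding hamming_def by (auto simp: vec_eq_iff)

lemma dist_code_le_hamming: "c \<in> C \<Longrightarrow> dist_code (v :: 'a ^ 'n::finite) C \<le> hamming v c"
  unfolding dist_code_def
  by (rule Min_le) (auto intro!: finite_subset[of _ "{..CARD('n)}"] hamming_le_card)

lemma dist_code_attained:
  assumes "C \<noteq> {}"
  obtains c where "c \<in> C" and "dist_code (v :: 'a ^ 'n::finite) C = hamming v c"
proof -
  have "dist_code v C \<in> {hamming v x | x. x \<in> C}"
    unfolding dist_code_def
    by (rule Min_in) (use assms in \<open>auto intro!: finite_subset[of _ "{..CARD('n)}"] hamming_le_card\<close>)
  thus ?thesis using that by auto
qed

lemma dist_code_le_covering_radius:
  "dist_code (v :: 'a::finite ^ 'n::finite) C \<le> covering_radius C"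
proof -
  have "{dist_code v C | v. v \<in> (UNIV :: ('a ^ 'n) set)} = range (\<lambda>v. dist_code v C)" by auto
  hence "finite {dist_code v C | v. v \<in> (UNIV :: ('a ^ 'n) set)}" by simp
  thus ?thesis unfolding covering_radius_def by (rule Max_ge) auto
qed

lemma min_distance_le_hamming:
  "\<lbrakk>x \<in> C; y \<in> C; x \<noteq> y\<rbrakk> \<Longrightarrow> min_distance (C :: ('a ^ 'n::finite) set) \<le> hamming x y"
  unfolding min_distance_def
  by (rule Min_le) (auto intro!: finite_subset[of _ "{..CARD('n)}"] hamming_le_card)

lemma min_distance_pos:
  assumes "x \<in> C" "y \<in> C" "x \<noteq> y"
  shows "0 < min_distance (C :: ('a ^ 'n::finite) set)"
proof -
  have "min_distance C \<in> {hamming x y | x y. x \<in> C \<and> y \<in> C \<and> x \<noteq> y}"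
    unfolding min_distance_def
    by (rule Min_in) (use assms in \<open>auto intro!: finite_subset[of _ "{..CARD('n)}"] hamming_le_card\<close>)
  then obtain x' y' :: "'a ^ 'n" where "x' \<noteq> y'" "min_distance C = hamming x' y'"
    by blast
  thus ?thesis using hamming_eq_0_iff by (metis gr0I)
qed

lemma min_distance_eq_1:
  assumes "v \<in> D" "w \<in> D" "hamming v w = 1"
  shows "min_distance (D :: ('a ^ 'n::finite) set) = 1"
proof -
  have "v \<noteq> w" using assms(3) hamming_eq_0_iff by (metis zero_neq_one)
  have "0 < min_distance D" by (rule min_distance_pos[OF assms(1,2) \<open>v \<noteq> w\<close>])
  moreover have "min_distance D \<le> 1"
    using min_distance_le_hamming[OF assms(1,2) \<open>v \<noteq> w\<close>] assms(3) by simp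
  ultimately show ?thesis by simp
qed

lemma dist_code_ge_min:
  assumes "c \<in> C"
  shows "min (hamming c w) (min_distance C - hamming c w) \<le> dist_code (w :: 'a ^ 'n::finite) C"
proof -
  obtain c' where "c' \<in> C" and dist: "dist_code w C = hamming w c'"
    using dist_code_attained assms by blast
  show ?thesis
  proof (cases "c' = c")
    case True
    thus ?thesis using dist hamming_commute by (metis min.cobounded1)
  next
    case False
    have "min_distance C \<le> hamming c c'"
      using min_distance_le_hamming[OF assms \<open>c' \<in> C\<close>] False by simp
    also have "\<dots> \<le> hamming c w + hamming w c'" by (rule hamming_triangle)
    finally show ?thesis using dist by linarith
  qed
qed

lemma perfect_code_min_distance:
  assumes "card C \<ge> 2" "perfect_code C"
  shows "2 * covering_radius C + 1 \<le> min_distance (C :: ('a ^ 'n::finite) set)"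
    and "min_distance C \<le> CARD('n)"
proof -
  have "finite C" using assms(1) by (metis card.infinite not_numeral_le_zero)
  then obtain x y where xy: "x \<in> C" "y \<in> C" "x \<noteq> y"
    using assms(1) card_le_Suc0_iff_eq[OF \<open>finite C\<close>] by fastforce
  have "covering_radius C = (min_distance C - 1) div 2"
    using assms(2) unfolding perfect_code_def packing_radius_def by simp
  with min_distance_pos[OF xy] show "2 * covering_radius C + 1 \<le> min_distance C" by linarith
  show "min_distance C \<le> CARD('n)"
    using min_distance_le_hamming[OF xy] hamming_le_card order_trans by blast
qed

definition add_one_on :: "'n set \<Rightarrow> 'a::ring_1 ^ 'n \<Rightarrow> 'a ^ 'n" where
  "add_one_on S c = (\<chi> i. if i \<in> S then c $ i + 1 else c $ i)"

lemma hamming_add_one_on: "hamming c (add_one_on S c) = card (S :: 'n::finite set)"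
  unfolding hamming_def add_one_on_def by simp

lemma hamming_add_one_on_insert:
  "j \<notin> S \<Longrightarrow> hamming (add_one_on S c) (add_one_on (insert j S) c) = 1"
proof -
  assume "j \<notin> S"
  hence "{i. add_one_on S c $ i \<noteq> add_one_on (insert j S) c $ i} = {j}"
    unfolding add_one_on_def by auto
  thus ?thesis unfolding hamming_def by simp
qed

theorem lemma2p1:
  fixes C :: "('a::{finite,field} ^ 'n::finite) set"
  assumes "card C \<ge> 2"
    and "perfect_code C"
  shows "min_distance (at_distance C (covering_radius C)) = 1"
proof -
  define \<rho> where "\<rho> = covering_radius C"
  have d: "2 * \<rho> + 1 \<le> min_distance C" "min_distance C \<le> CARD('n)"
    using perfect_code_min_distance[OF assms] unfolding \<rho>_def by auto
  obtain c where c: "c \<in> C" using assms(1) by fastforce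
  have "\<rho> < CARD('n)" using d by linarith
  then obtain S :: "'n set" where S: "card S = \<rho>"
    using obtain_subset_with_card_n[of \<rho> "UNIV :: 'n set"] by auto
  with \<open>\<rho> < CARD('n)\<close> have "S \<noteq> UNIV" by auto
  then obtain j where j: "j \<notin> S" by auto
  define v where "v = add_one_on S c"
  define w where "w = add_one_on (insert j S) c"
  have cv: "hamming c v = \<rho>" and cw: "hamming c w = \<rho> + 1"
    using S j by (simp_all add: v_def w_def hamming_add_one_on)
  have "dist_code v C \<le> \<rho>" using dist_code_le_hamming[OF c, of v] cv hamming_commute by metis
  moreover have "\<rho> \<le> dist_code v C" using dist_code_ge_min[OF c, of v] cv d(1) by simp
  moreover have "dist_code w C \<le> \<rho>" using dist_code_le_covering_radius \<rho>_def by metis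
  moreover have "\<rho> \<le> dist_code w C" using dist_code_ge_min[OF c, of w] cw d(1) by simp
  ultimately have "v \<in> at_distance C \<rho>" and "w \<in> at_distance C \<rho>"
    unfolding at_distance_def by auto
  moreover have "hamming v w = 1"
    unfolding v_def w_def by (rule hamming_add_one_on_insert[OF j])
  ultimately show ?thesis unfolding \<rho>_def by (rule min_distance_eq_1)
qed

end
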